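(* The system of equations below implies the following Kelvin theorem for the fluid circulation: $$\frac{d}{dt}\oint_{c(\widehat{\mathbf{v}})}\widehat{\mathbf{v}}\cdot d\mathbf{r}=\epsilon\sigma^4\oint_{c(\widehat{\mathbf{v}})}\frac{1}{D}\mathrm{div}_{\mathbf{r}}\big(D\widehat{w}^2\nabla\zeta\big)\,d\zeta+|\nabla_{\mathbf{r}}\zeta|^2\,d\widehat{w}^2/2,$$ in which $c(\widehat{\mathbf{v}})$ is a closed loop moving with the material velocity $\widehat{\mathbf{v}}$.
   Context: On a free surface $z=\zeta(\mathbf{r},t)$ over horizontal coordinates $\mathbf{r}=(x,y)$, consider the fields: horizontal transport velocity $\widehat{\mathbf{v}}$, vertical velocity $\widehat{w}$, areal density $D$, surface velocity potential $\widehat{\phi}$, elevation $\zeta$ and wave momentum density $\lambda$; $\sigma$ is the aspect ratio, $Fr$ the Froude number and $0\le\epsilon\le1$ a constant. Stationarity of the action $S=\int\int D\big(\tfrac12(|\widehat{\mathbf{v}}|^2+\sigma^2\widehat{w}^2+\epsilon\sigma^4|\widehat{w}\nabla_{\mathbf{r}}\zeta|^2)-\zeta/Fr^2\big)+\sigma^2\lambda(\partial_t\zeta+\widehat{\mathbf{v}}\cdot\nabla_{\mathbf{r}}\zeta-\widehat{w})+\widehat{\phi}(\partial_tD+\mathrm{div}_{\mathbf{r}}(D\widehat{\mathbf{v}}))\,d^2r\,dt$ yields: $\mathbf{V}\cdot d\mathbf{r}:=\widehat{\mathbf{v}}\cdot d\mathbf{r}+\sigma^2(\lambda/D)\,d\zeta=d\widehat{\phi}$;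 $\lambda/D=\widehat{w}(1+\epsilon\sigma^2|\nabla_{\mathbf{r}}\zeta|^2)$; $\partial_t\zeta+\widehat{\mathbf{v}}\cdot\nabla_{\mathbf{r}}\zeta-\widehat{w}=0$; $\partial_t\lambda+\mathrm{div}_{\mathbf{r}}(\lambda\widehat{\mathbf{v}})=-D/(\sigma^2Fr^2)-\mathrm{div}_{\mathbf{r}}(\epsilon\sigma^2D\widehat{w}^2\nabla_{\mathbf{r}}\zeta)$; $\partial_tD+\mathrm{div}_{\mathbf{r}}(D\widehat{\mathbf{v}})=0$; $(\partial_t+\widehat{\mathbf{v}}\cdot\nabla_{\mathbf{r}})\widehat{\phi}=\tfrac12\big(|\widehat{\mathbf{v}}|^2+\sigma^2\widehat{w}^2(1+\epsilon\sigma^2|\nabla_{\mathbf{r}}\zeta|^2)\big)-\zeta/Fr^2$. *)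

theory Defs
  imports "HOL-Analysis.Analysis"
begin

text \<open>Horizontal coordinates r = (x,y) are modelled as real \<times> real; a scalar field is
  a function f :: real \<times> real \<Rightarrow> real \<Rightarrow> real (position, time), a horizontal vector
  field is u :: real \<times> real \<Rightarrow> real \<Rightarrow> real \<times> real.\<close>

definition C1 :: "('a::real_normed_vector \<Rightarrow> 'b::real_normed_vector) \<Rightarrow> bool" where
  "C1 f \<longleftrightarrow> (\<exists>f'. (\<forall>x. (f has_derivative blinfun_apply (f' x)) (at x)) \<and> continuous_on UNIV f')"

definition C2 :: "('a::real_normed_vector \<Rightarrow> 'b::real_normed_vector) \<Rightarrow> bool" where
  "C2 f \<longleftrightarrow> (\<exists>f'. (\<forall>x. (f has_derivative blinfun_apply (f' x)) (at x)) \<and> C1 f')"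

definition pdx :: "(real \<times> real \<Rightarrow> real \<Rightarrow> real) \<Rightarrow> real \<times> real \<Rightarrow> real \<Rightarrow> real" where
  "pdx f r t = deriv (\<lambda>x. f (x, snd r) t) (fst r)"

definition pdy :: "(real \<times> real \<Rightarrow> real \<Rightarrow> real) \<Rightarrow> real \<times> real \<Rightarrow> real \<Rightarrow> real" where
  "pdy f r t = deriv (\<lambda>y. f (fst r, y) t) (snd r)"

definition pdt :: "(real \<times> real \<Rightarrow> real \<Rightarrow> real) \<Rightarrow> real \<times> real \<Rightarrow> real \<Rightarrow> real" where
  "pdt f r t = deriv (\<lambda>s. f r s) t"

definition grad :: "(real \<times> real \<Rightarrow> real \<Rightarrow> real) \<Rightarrow> real \<times> real \<Rightarrow> real \<Rightarrow> real \<times> real" where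
  "grad f r t = (pdx f r t, pdy f r t)"

definition hdiv :: "(real \<times> real \<Rightarrow> real \<Rightarrow> real \<times> real) \<Rightarrow> real \<times> real \<Rightarrow> real \<Rightarrow> real" where
  "hdiv u r t = pdx (\<lambda>r t. fst (u r t)) r t + pdy (\<lambda>r t. snd (u r t)) r t"

definition circulation :: "(real \<times> real \<Rightarrow> real \<Rightarrow> real \<times> real) \<Rightarrow> (real \<Rightarrow> real \<Rightarrow> real \<times> real) \<Rightarrow> real \<Rightarrow> real" where
  "circulation u c t = integral {0..1} (\<lambda>s. inner (u (c s t) t) (vector_derivative (\<lambda>s. c s t) (at s)))"

end

(* The relation v = grad phi - sigma^2 (lam/D) grad zeta makes the circulation around the closed
   loop equal to -sigma^2 times the loop integral of (lam/D) d zeta, since the grad phi part is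
   exact. Differentiating along the material loop, the two conservation laws give the rate of
   change -1/(sigma^2 Fr^2) - eps sigma^2 D^-1 div(D w^2 grad zeta) of lam/D, and because zeta is
   advected with vertical velocity w, the time derivative of d zeta is d w (symmetry of the mixed
   partial derivatives of zeta(c(s,t),t)). Inserting lam/D = w (1 + eps sigma^2 |grad zeta|^2),
   the gravity term and w dw are exact and vanish around the loop, which leaves the stated
   right-hand side; its term |grad zeta|^2 d(w^2)/2 enters with a minus sign. *)

theory Submission
  imports Defs
begin

lemma has_vector_derivative_compose_at:
  assumes "(g has_vector_derivative g') (at x)" and "(F has_derivative F') (at (g x))"
  shows "((\<lambda>x. F (g x)) has_vector_derivative F' g') (at x)"
  using vector_derivative_diff_chain_within[OF assms(1) has_derivative_at_withinI[OF assms(2)]]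
  by (simp add: o_def)

lemma has_real_derivative_field_along_curve:
  fixes f :: "real \<times> real \<Rightarrow> real \<Rightarrow> real"
  assumes f: "((\<lambda>(r, t). f r t) has_derivative f') (at (\<gamma> x, \<tau> x))"
    and \<gamma>: "(\<gamma> has_vector_derivative \<gamma>') (at x)" and \<tau>: "(\<tau> has_real_derivative \<tau>') (at x)"
  shows "((\<lambda>x. f (\<gamma> x) (\<tau> x)) has_real_derivative f' (\<gamma>', \<tau>')) (at x)"
proof -
  have "((\<lambda>x. (\<gamma> x, \<tau> x)) has_vector_derivative (\<gamma>', \<tau>')) (at x)"
    using \<gamma> \<tau> by (auto intro: has_vector_derivative_Pair simp: has_real_derivative_iff_has_vector_derivative)
  from has_vector_derivative_compose_at[OF this f]
  show ?thesis by (simp add: has_real_derivative_iff_has_vector_derivative)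
qed

lemma has_real_derivative_partials:
  fixes f :: "real \<times> real \<Rightarrow> real \<Rightarrow> real"
  assumes f: "((\<lambda>(r, t). f r t) has_derivative f') (at (r, t))"
  shows "((\<lambda>x. f (x, snd r) t) has_real_derivative f' ((1, 0), 0)) (at (fst r))"
    and "((\<lambda>y. f (fst r, y) t) has_real_derivative f' ((0, 1), 0)) (at (snd r))"
    and "((\<lambda>t. f r t) has_real_derivative f' ((0, 0), 1)) (at t)"
proof -
  have "((\<lambda>x. (x, snd r)) has_vector_derivative (1, 0)) (at (fst r))"
    "((\<lambda>y. (fst r, y)) has_vector_derivative (0, 1)) (at (snd r))"
    "((\<lambda>_. r) has_vector_derivative 0) (at t)"
    by (auto intro!: has_vector_derivative_Pair)
  then show "((\<lambda>x. f (x, snd r) t) has_real_derivative f' ((1, 0), 0)) (at (fst r))"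
    "((\<lambda>y. f (fst r, y) t) has_real_derivative f' ((0, 1), 0)) (at (snd r))"
    "((\<lambda>t. f r t) has_real_derivative f' ((0, 0), 1)) (at t)"
    using has_real_derivative_field_along_curve[where f=f and \<gamma>="\<lambda>x. (x, snd r)" and \<tau>="\<lambda>_. t"]
      has_real_derivative_field_along_curve[where f=f and \<gamma>="\<lambda>y. (fst r, y)" and \<tau>="\<lambda>_. t"]
      has_real_derivative_field_along_curve[where f=f and \<gamma>="\<lambda>_. r" and \<tau>="\<lambda>t. t"] f
    by (auto simp: zero_prod_def)
qed

lemma field_partials_eq_derivative:
  fixes f :: "real \<times> real \<Rightarrow> real \<Rightarrow> real"
  assumes "((\<lambda>(r, t). f r t) has_derivative f') (at (r, t))"
  shows "pdx f r t = f' ((1, 0), 0)" and "pdy f r t = f' ((0, 1), 0)" and "pdt f r t = f' ((0, 0), 1)"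
  unfolding pdx_def pdy_def pdt_def using has_real_derivative_partials[OF assms] by (auto intro: DERIV_imp_deriv)

lemma field_derivative_eq_partials:
  fixes f :: "real \<times> real \<Rightarrow> real \<Rightarrow> real"
  assumes f: "((\<lambda>(r, t). f r t) has_derivative f') (at (r, t))"
  shows "f' (h, k) = inner h (grad f r t) + k * pdt f r t"
proof -
  have "(h, k) = fst h *\<^sub>R ((1, 0), 0) + snd h *\<^sub>R ((0, 1), 0) + k *\<^sub>R ((0, 0), 1)"
    by (simp add: prod_eq_iff)
  then have "f' (h, k) = fst h * f' ((1, 0), 0) + snd h * f' ((0, 1), 0) + k * f' ((0, 0), 1)"
    by (simp only: linear_simps[OF has_derivative_bounded_linear[OF f]] real_scaleR_def)
  then show ?thesis
    by (simp add: field_partials_eq_derivative[OF f] grad_def inner_prod_def)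
qed

lemma differentiable_field_partials:
  fixes f :: "real \<times> real \<Rightarrow> real \<Rightarrow> real"
  assumes "(\<lambda>(r, t). f r t) differentiable (at (r, t))"
  shows "((\<lambda>x. f (x, snd r) t) has_real_derivative pdx f r t) (at (fst r))"
    and "((\<lambda>y. f (fst r, y) t) has_real_derivative pdy f r t) (at (snd r))"
    and "((\<lambda>t. f r t) has_real_derivative pdt f r t) (at t)"
proof -
  obtain f' where f': "((\<lambda>(r, t). f r t) has_derivative f') (at (r, t))"
    using assms by (auto simp: differentiable_def)
  show "((\<lambda>x. f (x, snd r) t) has_real_derivative pdx f r t) (at (fst r))"
    "((\<lambda>y. f (fst r, y) t) has_real_derivative pdy f r t) (at (snd r))"
    "((\<lambda>t. f r t) has_real_derivative pdt f r t) (at t)"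
    unfolding field_partials_eq_derivative[OF f'] by (fact has_real_derivative_partials[OF f'])+
qed

lemma has_real_derivative_field_fixed_time:
  fixes f :: "real \<times> real \<Rightarrow> real \<Rightarrow> real"
  assumes f: "(\<lambda>(r, t). f r t) differentiable (at (\<gamma> s, t))"
    and \<gamma>: "(\<gamma> has_vector_derivative \<gamma>') (at s)"
  shows "((\<lambda>s. f (\<gamma> s) t) has_real_derivative inner \<gamma>' (grad f (\<gamma> s) t)) (at s)"
proof -
  obtain f' where f': "((\<lambda>(r, t). f r t) has_derivative f') (at (\<gamma> s, t))"
    using f by (auto simp: differentiable_def)
  from has_real_derivative_field_along_curve[where \<tau>="\<lambda>_. t", OF f' \<gamma> DERIV_const]
  show ?thesis by (simp add: field_derivative_eq_partials[OF f'])
qed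

section \<open>Divergence and material derivative\<close>

lemma differentiable_field_components:
  fixes u :: "real \<times> real \<Rightarrow> real \<Rightarrow> real \<times> real"
  assumes "(\<lambda>(r, t). u r t) differentiable (at p)"
  shows "(\<lambda>(r, t). fst (u r t)) differentiable (at p)" and "(\<lambda>(r, t). snd (u r t)) differentiable (at p)"
  using differentiable_chain_at[OF assms bounded_linear_imp_differentiable[OF bounded_linear_fst]]
    differentiable_chain_at[OF assms bounded_linear_imp_differentiable[OF bounded_linear_snd]]
  by (simp_all add: o_def case_prod_beta')

lemma hdiv_scaleR:
  fixes f :: "real \<times> real \<Rightarrow> real \<Rightarrow> real" and u :: "real \<times> real \<Rightarrow> real \<Rightarrow> real \<times> real"
  assumes f: "(\<lambda>(r, t). f r t) differentiable (at (r, t))"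
    and u: "(\<lambda>(r, t). u r t) differentiable (at (r, t))"
  shows "hdiv (\<lambda>r t. f r t *\<^sub>R u r t) r t = inner (grad f r t) (u r t) + f r t * hdiv u r t"
proof -
  note u1 = differentiable_field_partials[OF differentiable_field_components(1)[OF u]]
  note u2 = differentiable_field_partials[OF differentiable_field_components(2)[OF u]]
  note f12 = differentiable_field_partials[OF f]
  have "pdx (\<lambda>r t. fst (f r t *\<^sub>R u r t)) r t
      = pdx f r t * fst (u r t) + f r t * pdx (\<lambda>r t. fst (u r t)) r t"
    unfolding pdx_def[of "\<lambda>r t. fst (f r t *\<^sub>R u r t)"]
    using DERIV_mult[OF f12(1) u1(1)] by (auto intro!: DERIV_imp_deriv simp: algebra_simps)
  moreover have "pdy (\<lambda>r t. snd (f r t *\<^sub>R u r t)) r t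
      = pdy f r t * snd (u r t) + f r t * pdy (\<lambda>r t. snd (u r t)) r t"
    unfolding pdy_def[of "\<lambda>r t. snd (f r t *\<^sub>R u r t)"]
    using DERIV_mult[OF f12(2) u2(2)] by (auto intro!: DERIV_imp_deriv simp: algebra_simps)
  ultimately show ?thesis
    by (simp add: hdiv_def grad_def inner_prod_def algebra_simps)
qed

lemma hdiv_scaleR_const:
  assumes "(\<lambda>(r, t). u r t) differentiable (at (r, t))"
  shows "hdiv (\<lambda>r t. k *\<^sub>R u r t) r t = k * hdiv u r t"
  using hdiv_scaleR[where f="\<lambda>_ _. k", OF _ assms]
  by (simp add: grad_def pdx_def pdy_def case_prod_unfold zero_prod_def[symmetric])

definition material_deriv ::
    "(real \<times> real \<Rightarrow> real \<Rightarrow> real \<times> real) \<Rightarrow> (real \<times> real \<Rightarrow> real \<Rightarrow> real) \<Rightarrow>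
      real \<times> real \<Rightarrow> real \<Rightarrow> real"
  where "material_deriv v f r t = pdt f r t + inner (v r t) (grad f r t)"

lemma material_deriv_eq_derivative:
  fixes f :: "real \<times> real \<Rightarrow> real \<Rightarrow> real"
  assumes "((\<lambda>(r, t). f r t) has_derivative f') (at (r, t))"
  shows "material_deriv v f r t = f' (v r t, 1)"
  by (simp add: field_derivative_eq_partials[OF assms] material_deriv_def inner_commute)

lemma has_real_derivative_material_deriv:
  fixes f :: "real \<times> real \<Rightarrow> real \<Rightarrow> real" and v :: "real \<times> real \<Rightarrow> real \<Rightarrow> real \<times> real"
  assumes f: "(\<lambda>(r, t). f r t) differentiable (at (\<gamma> t, t))"
    and \<gamma>: "(\<gamma> has_vector_derivative v (\<gamma> t) t) (at t)"
  shows "((\<lambda>t. f (\<gamma> t) t) has_real_derivative material_deriv v f (\<gamma> t) t) (at t)"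
proof -
  obtain f' where f': "((\<lambda>(r, t). f r t) has_derivative f') (at (\<gamma> t, t))"
    using f by (auto simp: differentiable_def)
  from has_real_derivative_field_along_curve[OF f' \<gamma> DERIV_ident]
  show ?thesis by (simp add: material_deriv_eq_derivative[OF f'])
qed

lemma material_deriv_conservation_form:
  assumes "(\<lambda>(r, t). f r t) differentiable (at (r, t))" and "(\<lambda>(r, t). v r t) differentiable (at (r, t))"
  shows "pdt f r t + hdiv (\<lambda>r t. f r t *\<^sub>R v r t) r t = material_deriv v f r t + f r t * hdiv v r t"
  by (simp add: hdiv_scaleR[OF assms] material_deriv_def inner_commute)

lemma material_deriv_divide:
  fixes a D :: "real \<times> real \<Rightarrow> real \<Rightarrow> real"
  assumes a: "(\<lambda>(r, t). a r t) differentiable (at (r, t))"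
    and D: "(\<lambda>(r, t). D r t) differentiable (at (r, t))" and D_ne: "D r t \<noteq> 0"
  shows "material_deriv v (\<lambda>r t. a r t / D r t) r t
    = (material_deriv v a r t * D r t - a r t * material_deriv v D r t) / (D r t)\<^sup>2"
proof -
  obtain a' D' where a': "((\<lambda>(r, t). a r t) has_derivative a') (at (r, t))"
    and D': "((\<lambda>(r, t). D r t) has_derivative D') (at (r, t))"
    using a D by (auto simp: differentiable_def)
  have quotient: "((\<lambda>(r, t). a r t / D r t) has_derivative
      (\<lambda>h. (a' h * D r t - a r t * D' h) / (D r t * D r t))) (at (r, t))"
    using has_derivative_divide'[OF a' D'] D_ne unfolding case_prod_beta' by simp
  show ?thesis
    by (simp add: material_deriv_eq_derivative[OF quotient] material_deriv_eq_derivative[OF a']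
        material_deriv_eq_derivative[OF D'] power2_eq_square)
qed

lemma material_deriv_specific_density:
  assumes a: "(\<lambda>(r, t). a r t) differentiable (at (r, t))"
    and D: "(\<lambda>(r, t). D r t) differentiable (at (r, t))" and D_ne: "D r t \<noteq> 0"
    and v: "(\<lambda>(r, t). v r t) differentiable (at (r, t))"
    and a_balance: "pdt a r t + hdiv (\<lambda>r t. a r t *\<^sub>R v r t) r t = S"
    and D_balance: "pdt D r t + hdiv (\<lambda>r t. D r t *\<^sub>R v r t) r t = 0"
  shows "material_deriv v (\<lambda>r t. a r t / D r t) r t = S / D r t"
proof -
  have S: "S = material_deriv v a r t + a r t * hdiv v r t"
    using material_deriv_conservation_form[OF a v] a_balance by simp
  have "material_deriv v D r t = - D r t * hdiv v r t"
    using material_deriv_conservation_form[OF D v] D_balance by simp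
  then show ?thesis
    using D_ne by (simp add: material_deriv_divide[OF a D D_ne] S field_simps power2_eq_square)
qed

lemma C1_imp_differentiable:
  assumes "C1 f"
  shows "f differentiable (at x)"
  using assms unfolding C1_def differentiable_def by blast

lemma C1_imp_continuous_on:
  assumes "C1 f"
  shows "continuous_on S f"
  by (intro continuous_at_imp_continuous_on ballI differentiable_imp_continuous_within
      C1_imp_differentiable[OF assms])

lemma C2_imp_C1:
  assumes "C2 f"
  shows "C1 f"
proof -
  obtain f' where "\<forall>x. (f has_derivative blinfun_apply (f' x)) (at x)" and "C1 f'"
    using assms unfolding C2_def by blast
  with C1_imp_continuous_on[OF \<open>C1 f'\<close>] show ?thesis
    unfolding C1_def by blast
qed

lemma continuous_on_compose_field:
  assumes "continuous_on UNIV (\<lambda>(r, t). f r t)" and "continuous_on S a" and "continuous_on S b"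
  shows "continuous_on S (\<lambda>x. f (a x) (b x))"
  using continuous_on_compose2[OF assms(1) continuous_on_Pair[OF assms(2,3)]] by simp

lemma continuous_on_slice:
  assumes "continuous_on UNIV (\<lambda>(s, t). F s t)"
  shows "continuous_on S (\<lambda>s. F s t)"
  by (rule continuous_on_compose_field[OF assms continuous_on_id continuous_on_const])

lemma continuous_on_loop_field:
  fixes f :: "'a::topological_space \<Rightarrow> real \<Rightarrow> 'b::topological_space"
  assumes f: "continuous_on UNIV (\<lambda>(r, t). f r t)" and c: "continuous_on UNIV (\<lambda>(s, t). c s t)"
  shows "continuous_on UNIV (\<lambda>(s, t). f (c s t) t)"
  using c unfolding case_prod_beta'
  by (rule continuous_on_compose_field[OF f _ continuous_on_snd[OF continuous_on_id]])

lemma continuous_on_field_partials: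
  fixes f :: "real \<times> real \<Rightarrow> real \<Rightarrow> real"
  assumes "C1 (\<lambda>(r, t). f r t)"
  shows "continuous_on UNIV (\<lambda>(r, t). grad f r t)" and "continuous_on UNIV (\<lambda>(r, t). pdt f r t)"
proof -
  obtain f' where f': "\<And>p. ((\<lambda>(r, t). f r t) has_derivative blinfun_apply (f' p)) (at p)"
    and cont: "continuous_on UNIV f'"
    using assms unfolding C1_def by blast
  have "grad f r t = (f' (r, t) ((1, 0), 0), f' (r, t) ((0, 1), 0))" "pdt f r t = f' (r, t) ((0, 0), 1)" for r t
    using field_partials_eq_derivative[OF f'] by (simp_all add: grad_def)
  moreover have "continuous_on UNIV (\<lambda>p. f' p x)" for x
    by (intro continuous_intros cont)
  ultimately show "continuous_on UNIV (\<lambda>(r, t). grad f r t)" "continuous_on UNIV (\<lambda>(r, t). pdt f r t)"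
    unfolding case_prod_beta' by (auto intro!: continuous_on_Pair)
qed

lemma continuous_on_material_deriv:
  assumes f: "C1 (\<lambda>(r, t). f r t)" and v: "continuous_on UNIV (\<lambda>(r, t). v r t)"
  shows "continuous_on UNIV (\<lambda>(r, t). material_deriv v f r t)"
  using continuous_on_field_partials[OF f] v unfolding material_deriv_def case_prod_beta'
  by (intro continuous_intros)

lemma continuous_on_material_deriv_divide:
  assumes a: "C1 (\<lambda>(r, t). a r t)" and D: "C1 (\<lambda>(r, t). D r t)" and D_ne: "\<And>r t. D r t \<noteq> 0"
    and v: "continuous_on UNIV (\<lambda>(r, t). v r t)"
  shows "continuous_on UNIV (\<lambda>(r, t). material_deriv v (\<lambda>r t. a r t / D r t) r t)"
proof -
  have "continuous_on UNIV (\<lambda>(r, t). (material_deriv v a r t * D r t - a r t * material_deriv v D r t) / (D r t)\<^sup>2)"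
    using continuous_on_material_deriv[OF a v] continuous_on_material_deriv[OF D v]
      C1_imp_continuous_on[OF a] C1_imp_continuous_on[OF D] D_ne
    unfolding case_prod_beta' by (intro continuous_intros) auto
  then show ?thesis
    by (simp add: material_deriv_divide[OF C1_imp_differentiable[OF a] C1_imp_differentiable[OF D] D_ne])
qed

lemma differentiable_grad:
  fixes f :: "real \<times> real \<Rightarrow> real \<Rightarrow> real"
  assumes "C2 (\<lambda>(r, t). f r t)"
  shows "(\<lambda>(r, t). grad f r t) differentiable (at p)"
proof -
  obtain f' where f': "\<And>p. ((\<lambda>(r, t). f r t) has_derivative blinfun_apply (f' p)) (at p)" and "C1 f'"
    using assms unfolding C2_def by blast
  have "(\<lambda>p. f' p h) differentiable (at p)" for h
    using differentiable_chain_at[OF C1_imp_differentiable[OF \<open>C1 f'\<close>]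
        bounded_linear_imp_differentiable[OF blinfun.bounded_linear_left]] by (simp add: o_def)
  moreover have "(\<lambda>(r, t). grad f r t) = (\<lambda>p. (f' p ((1, 0), 0), f' p ((0, 1), 0)))"
    by (auto simp: fun_eq_iff grad_def field_partials_eq_derivative[OF f'])
  ultimately show ?thesis by simp
qed

section \<open>Integrals depending on a parameter\<close>

lemma fundamental_theorem_of_calculus_at:
  fixes f f' :: "real \<Rightarrow> real"
  assumes "a \<le> b" and "\<And>x. (f has_real_derivative f' x) (at x)"
  shows "(f' has_integral (f b - f a)) {a..b}"
  using assms by (intro fundamental_theorem_of_calculus)
    (auto simp: has_real_derivative_iff_has_vector_derivative[symmetric] intro: has_field_derivative_at_within)

lemma has_real_derivative_parametric_integral:
  fixes F Ft :: "real \<Rightarrow> real \<Rightarrow> real"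
  assumes F: "\<And>s t. ((\<lambda>t. F s t) has_real_derivative Ft s t) (at t)"
    and cont: "continuous_on UNIV (\<lambda>(s, t). F s t)" "continuous_on UNIV (\<lambda>(s, t). Ft s t)"
  shows "((\<lambda>t. integral {a..b} (\<lambda>s. F s t)) has_real_derivative integral {a..b} (\<lambda>s. Ft s t)) (at t)"
proof -
  have "((\<lambda>t. integral (cbox a b) (\<lambda>s. F s t)) has_real_derivative integral (cbox a b) (\<lambda>s. Ft s t))
      (at t within UNIV)"
  proof (rule leibniz_rule_field_derivative[where f="\<lambda>t s. F s t" and fx="\<lambda>t s. Ft s t"])
    show "(\<lambda>s. F s t) integrable_on cbox a b" for t
      by (rule integrable_continuous continuous_on_slice[OF cont(1)])+
    show "continuous_on (UNIV \<times> cbox a b) (\<lambda>(t, s). Ft s t)"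
      unfolding case_prod_beta'
      by (rule continuous_on_compose_field[OF cont(2) continuous_on_snd continuous_on_fst]; rule continuous_on_id)
  qed (use F in auto)
  then show ?thesis by (simp add: cbox_interval)
qed

lemma has_real_derivative_integral_mult:
  fixes L Lt P Pt :: "real \<Rightarrow> real \<Rightarrow> real"
  assumes L: "\<And>s t. ((\<lambda>t. L s t) has_real_derivative Lt s t) (at t)"
    and P: "\<And>s t. ((\<lambda>t. P s t) has_real_derivative Pt s t) (at t)"
    and cont: "continuous_on UNIV (\<lambda>(s, t). L s t)" "continuous_on UNIV (\<lambda>(s, t). Lt s t)"
      "continuous_on UNIV (\<lambda>(s, t). P s t)" "continuous_on UNIV (\<lambda>(s, t). Pt s t)"
  shows "((\<lambda>t. integral {a..b} (\<lambda>s. L s t * P s t)) has_real_derivative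
      integral {a..b} (\<lambda>s. Lt s t * P s t + L s t * Pt s t)) (at t)"
proof (rule has_real_derivative_parametric_integral)
  show "((\<lambda>t. L s t * P s t) has_real_derivative Lt s t * P s t + L s t * Pt s t) (at t)" for s t
    using DERIV_mult[OF L P] by (simp add: mult.commute)
  show "continuous_on UNIV (\<lambda>(s, t). L s t * P s t)"
    and "continuous_on UNIV (\<lambda>(s, t). Lt s t * P s t + L s t * Pt s t)"
    using cont unfolding case_prod_beta' by (intro continuous_on_mult continuous_on_add; simp)+
qed

lemma mixed_partials_commute:
  fixes g gs gt gst :: "real \<Rightarrow> real \<Rightarrow> real"
  assumes gs: "\<And>s t. ((\<lambda>s. g s t) has_real_derivative gs s t) (at s)"
    and gt: "\<And>s t. ((\<lambda>t. g s t) has_real_derivative gt s t) (at t)"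
    and gst: "\<And>s t. ((\<lambda>t. gs s t) has_real_derivative gst s t) (at t)"
    and cont: "continuous_on UNIV (\<lambda>(s, t). gs s t)" "continuous_on UNIV (\<lambda>(s, t). gst s t)"
    and gts: "((\<lambda>s. gt s t) has_real_derivative gts) (at s)"
  shows "gst s t = gts"
proof -
  \<comment> \<open>Differentiating \<open>g u - g a = \<integral>\<^sub>a\<^sup>u gs\<close> under the integral sign gives
    \<open>gt u - gt a = \<integral>\<^sub>a\<^sup>u gst\<close>; now differentiate in \<open>u\<close>.\<close>
  define a where "a = s - 1"
  have "a < s" by (simp add: a_def)
  have gt_eq: "integral {a..u} (\<lambda>\<sigma>. gst \<sigma> t) = gt u t - gt a t" if "a \<le> u" for u
  proof -
    have "integral {a..u} (\<lambda>\<sigma>. gs \<sigma> \<tau>) = g u \<tau> - g a \<tau>" for \<tau>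
      using fundamental_theorem_of_calculus_at[OF that gs] by (rule integral_unique)
    then have "((\<lambda>\<tau>. g u \<tau> - g a \<tau>) has_real_derivative integral {a..u} (\<lambda>\<sigma>. gst \<sigma> t)) (at t)"
      using has_real_derivative_parametric_integral[OF gst cont, of a u t] by simp
    moreover have "((\<lambda>\<tau>. g u \<tau> - g a \<tau>) has_real_derivative gt u t - gt a t) (at t)"
      by (intro DERIV_diff gt)
    ultimately show ?thesis by (rule DERIV_unique)
  qed
  have "((\<lambda>u. integral {a..u} (\<lambda>\<sigma>. gst \<sigma> t)) has_real_derivative gst s t) (at s)"
  proof -
    have "continuous_on {a..s + 1} (\<lambda>\<sigma>. gst \<sigma> t)"
      by (rule continuous_on_slice[OF cont(2)])
    moreover have s: "s \<in> interior {a..s + 1}"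
      using \<open>a < s\<close> by simp
    ultimately show ?thesis
      using integral_has_real_derivative[of a "s + 1" _ s] interior_subset at_within_interior[OF s] by auto
  qed
  moreover have "s \<in> {a<..}"
    using \<open>a < s\<close> by simp
  ultimately have "((\<lambda>u. gt u t - gt a t) has_real_derivative gst s t) (at s)"
    by (rule has_field_derivative_transform_within_open[OF _ open_greaterThan]) (simp add: gt_eq)
  moreover have "((\<lambda>u. gt u t - gt a t) has_real_derivative gts) (at s)"
    using DERIV_diff[OF gts DERIV_const] by simp
  ultimately show ?thesis by (rule DERIV_unique)
qed

section \<open>Calculus on a moving loop\<close>

lemma loop_tangent:
  fixes c :: "real \<Rightarrow> real \<Rightarrow> 'a::real_normed_vector"
  assumes "C1 (\<lambda>(s, t). c s t)"
  shows "((\<lambda>s. c s t) has_vector_derivative vector_derivative (\<lambda>s. c s t) (at s)) (at s)"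
    and "continuous_on UNIV (\<lambda>(s, t). vector_derivative (\<lambda>s. c s t) (at s))"
proof -
  obtain c' where c': "\<And>p. ((\<lambda>(s, t). c s t) has_derivative blinfun_apply (c' p)) (at p)"
    and cont: "continuous_on UNIV c'"
    using assms unfolding C1_def by blast
  have "((\<lambda>s. c s t) has_vector_derivative c' (s, t) (1, 0)) (at s)" for s t
    using has_vector_derivative_compose_at[OF has_vector_derivative_Pair[OF has_vector_derivative_id
          has_vector_derivative_const[of t]] c'] by simp
  moreover from this have tangent: "vector_derivative (\<lambda>s. c s t) (at s) = c' (s, t) (1, 0)" for s t
    by (rule vector_derivative_at)
  ultimately show "((\<lambda>s. c s t) has_vector_derivative vector_derivative (\<lambda>s. c s t) (at s)) (at s)"
    by simp
  have "continuous_on UNIV (\<lambda>p. c' p (1, 0))"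
    by (intro continuous_intros cont)
  then show "continuous_on UNIV (\<lambda>(s, t). vector_derivative (\<lambda>s. c s t) (at s))"
    by (simp add: tangent case_prod_beta')
qed

lemma continuous_on_loop_slope:
  fixes f :: "real \<times> real \<Rightarrow> real \<Rightarrow> real"
  assumes f: "C1 (\<lambda>(r, t). f r t)" and c: "C1 (\<lambda>(s, t). c s t)"
  shows "continuous_on UNIV (\<lambda>(s, t). deriv (\<lambda>s. f (c s t) t) s)"
proof -
  have "deriv (\<lambda>s. f (c s t) t) s = inner (vector_derivative (\<lambda>s. c s t) (at s)) (grad f (c s t) t)" for s t
    by (rule DERIV_imp_deriv has_real_derivative_field_fixed_time C1_imp_differentiable f loop_tangent c)+
  with loop_tangent(2)[OF c]
    continuous_on_loop_field[OF continuous_on_field_partials(1)[OF f] C1_imp_continuous_on[OF c]]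
  show ?thesis
    unfolding case_prod_beta' by (simp add: continuous_on_inner)
qed

lemma loop_slope_differentiable:
  fixes f :: "real \<times> real \<Rightarrow> real \<Rightarrow> real" and c :: "real \<Rightarrow> real \<Rightarrow> real \<times> real"
  assumes "(\<lambda>(r, t). f r t) differentiable (at (c s t, t))" and "C1 (\<lambda>(s, t). c s t)"
  shows "(\<lambda>s. f (c s t) t) differentiable (at s)"
  using has_real_derivative_field_fixed_time[where \<gamma>="\<lambda>s. c s t", OF assms(1) loop_tangent(1)[OF assms(2)]]
  by (auto simp: real_differentiable_def)

lemma loop_slope_has_time_derivative:
  fixes f :: "real \<times> real \<Rightarrow> real \<Rightarrow> real" and c :: "real \<Rightarrow> real \<Rightarrow> real \<times> real"
  assumes f: "C2 (\<lambda>(r, t). f r t)" and c: "C2 (\<lambda>(s, t). c s t)"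
  obtains Zst where "\<And>s t. ((\<lambda>t. deriv (\<lambda>s. f (c s t) t) s) has_real_derivative Zst s t) (at t)"
    and "continuous_on UNIV (\<lambda>(s, t). Zst s t)"
proof -
  obtain f1 f2 where f1: "\<And>p. ((\<lambda>(r, t). f r t) has_derivative blinfun_apply (f1 p)) (at p)"
    and f2: "\<And>p. (f1 has_derivative blinfun_apply (f2 p)) (at p)"
    and f1_cont: "continuous_on UNIV f1" and f2_cont: "continuous_on UNIV f2"
    using f C1_imp_continuous_on unfolding C2_def by (metis C1_def)
  obtain c1 c2 where c1: "\<And>p. ((\<lambda>(s, t). c s t) has_derivative blinfun_apply (c1 p)) (at p)"
    and c2: "\<And>p. (c1 has_derivative blinfun_apply (c2 p)) (at p)"
    and c1_cont: "continuous_on UNIV c1" and c2_cont: "continuous_on UNIV c2"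
    using c C1_imp_continuous_on unfolding C2_def by (metis C1_def)
  define T where "T s t = c1 (s, t) (1, 0)" for s t
  define Zst where "Zst s t = f1 (c s t, t) (c2 (s, t) (0, 1) (1, 0), 0) + f2 (c s t, t) (c1 (s, t) (0, 1), 1) (T s t, 0)"
    for s t
  have c_s: "((\<lambda>s. c s t) has_vector_derivative T s t) (at s)" for s t
    using has_vector_derivative_compose_at[OF has_vector_derivative_Pair[OF has_vector_derivative_id
          has_vector_derivative_const[of t]] c1] by (simp add: T_def)
  have "((\<lambda>s. f (c s t) t) has_real_derivative f1 (c s t, t) (T s t, 0)) (at s)" for s t
    using has_real_derivative_field_along_curve[where \<tau>="\<lambda>_. t", OF f1 c_s DERIV_const] by simp
  then have slope: "deriv (\<lambda>s. f (c s t) t) s = f1 (c s t, t) (T s t, 0)" for s t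
    by (rule DERIV_imp_deriv)
  have "((\<lambda>t. f1 (c s t, t) (T s t, 0)) has_real_derivative Zst s t) (at t)" for s t
  proof -
    have "((\<lambda>t. c s t) has_vector_derivative c1 (s, t) (0, 1)) (at t)"
      using has_vector_derivative_compose_at[OF has_vector_derivative_Pair[OF has_vector_derivative_const[of s]
          has_vector_derivative_id] c1] by simp
    from has_vector_derivative_compose_at[OF has_vector_derivative_Pair[OF this has_vector_derivative_id] f2]
    have f1_t: "((\<lambda>t. f1 (c s t, t)) has_vector_derivative f2 (c s t, t) (c1 (s, t) (0, 1), 1)) (at t)"
      by simp
    have "((\<lambda>t. c1 (s, t)) has_vector_derivative c2 (s, t) (0, 1)) (at t)"
      using has_vector_derivative_compose_at[OF has_vector_derivative_Pair[OF has_vector_derivative_const[of s]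
            has_vector_derivative_id] c2] by simp
    from blinfun.has_vector_derivative[OF this has_vector_derivative_const[of "(1, 0)"]]
    have "((\<lambda>t. T s t) has_vector_derivative c2 (s, t) (0, 1) (1, 0)) (at t)"
      by (simp add: T_def)
    from blinfun.has_vector_derivative[OF f1_t has_vector_derivative_Pair[OF this has_vector_derivative_const]]
    show ?thesis by (simp add: Zst_def has_real_derivative_iff_has_vector_derivative)
  qed
  then have "((\<lambda>t. deriv (\<lambda>s. f (c s t) t) s) has_real_derivative Zst s t) (at t)" for s t
    by (simp add: slope)
  moreover have "continuous_on UNIV (\<lambda>p. (c (fst p) (snd p), snd p))"
    using C1_imp_continuous_on[OF C2_imp_C1[OF c]] by (simp add: case_prod_beta' continuous_on_Pair continuous_on_snd)
  from continuous_on_compose2[OF f1_cont this] continuous_on_compose2[OF f2_cont this]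
  have "continuous_on UNIV (\<lambda>p. f1 (c (fst p) (snd p), snd p))"
    and "continuous_on UNIV (\<lambda>p. f2 (c (fst p) (snd p), snd p))" by simp_all
  then have "continuous_on UNIV (\<lambda>(s, t). Zst s t)"
    unfolding Zst_def T_def case_prod_beta' prod.collapse by (intro continuous_intros c1_cont c2_cont)
  ultimately show ?thesis
    by (rule that)
qed

lemma loop_slope_time_derivative:
  fixes f g :: "real \<times> real \<Rightarrow> real \<Rightarrow> real" and c :: "real \<Rightarrow> real \<Rightarrow> real \<times> real"
  assumes f: "C2 (\<lambda>(r, t). f r t)" and c: "C2 (\<lambda>(s, t). c s t)"
    and g: "\<And>p. (\<lambda>(r, t). g r t) differentiable (at p)"
    and f_t: "\<And>s t. ((\<lambda>t. f (c s t) t) has_real_derivative g (c s t) t) (at t)"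
  shows "((\<lambda>t. deriv (\<lambda>s. f (c s t) t) s) has_real_derivative deriv (\<lambda>s. g (c s t) t) s) (at t)"
proof -
  obtain Zst where Zst: "\<And>s t. ((\<lambda>t. deriv (\<lambda>s. f (c s t) t) s) has_real_derivative Zst s t) (at t)"
    and Zst_cont: "continuous_on UNIV (\<lambda>(s, t). Zst s t)"
    using loop_slope_has_time_derivative[OF f c] by blast
  have c_s: "((\<lambda>s. c s t) has_vector_derivative vector_derivative (\<lambda>s. c s t) (at s)) (at s)" for s t
    by (rule loop_tangent(1)[OF C2_imp_C1[OF c]])
  have slope: "((\<lambda>s. f (c s t) t) has_real_derivative deriv (\<lambda>s. f (c s t) t) s) (at s)"
    and g_s: "((\<lambda>s. g (c s t) t) has_real_derivative deriv (\<lambda>s. g (c s t) t) s) (at s)" for s t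
    using has_real_derivative_field_fixed_time[OF C1_imp_differentiable[OF C2_imp_C1[OF f]] c_s[where s=s and t=t]]
      has_real_derivative_field_fixed_time[OF g c_s[where s=s and t=t]]
    by (auto simp: DERIV_deriv_iff_real_differentiable real_differentiable_def)
  have "Zst s t = deriv (\<lambda>s. g (c s t) t) s"
    by (rule mixed_partials_commute[OF slope f_t Zst continuous_on_loop_slope[OF C2_imp_C1[OF f] C2_imp_C1[OF c]]
          Zst_cont g_s])
  with Zst[of s t] show ?thesis
    by simp
qed

section \<open>Circulation\<close>

lemma circulation_Clebsch:
  fixes v :: "real \<times> real \<Rightarrow> real \<Rightarrow> real \<times> real" and m \<phi> \<zeta> :: "real \<times> real \<Rightarrow> real \<Rightarrow> real"
  assumes Clebsch: "\<And>r t. v r t + m r t *\<^sub>R grad \<zeta> r t = grad \<phi> r t"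
    and \<phi>: "\<And>p. (\<lambda>(r, t). \<phi> r t) differentiable (at p)" and \<zeta>: "C1 (\<lambda>(r, t). \<zeta> r t)"
    and m: "continuous_on UNIV (\<lambda>(r, t). m r t)"
    and c: "C1 (\<lambda>(s, t). c s t)" and closed: "c 0 t = c 1 t"
  shows "circulation v c t = - integral {0..1} (\<lambda>s. m (c s t) t * deriv (\<lambda>s. \<zeta> (c s t) t) s)"
proof -
  define T where "T s = vector_derivative (\<lambda>s. c s t) (at s)" for s
  have T: "((\<lambda>s. c s t) has_vector_derivative T s) (at s)" for s
    unfolding T_def by (rule loop_tangent(1)[OF c])
  have \<zeta>_s: "deriv (\<lambda>s. \<zeta> (c s t) t) s = inner (T s) (grad \<zeta> (c s t) t)" for s
    by (rule DERIV_imp_deriv has_real_derivative_field_fixed_time C1_imp_differentiable \<zeta> T)+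
  have "inner (v (c s t) t) (T s)
      = inner (T s) (grad \<phi> (c s t) t) - m (c s t) t * deriv (\<lambda>s. \<zeta> (c s t) t) s" for s
  proof -
    have "v (c s t) t = grad \<phi> (c s t) t - m (c s t) t *\<^sub>R grad \<zeta> (c s t) t"
      using Clebsch[of "c s t" t] by (simp add: eq_diff_eq)
    then show ?thesis
      by (simp add: \<zeta>_s inner_diff_left inner_commute[of "T s"])
  qed
  then have "circulation v c t
      = integral {0..1} (\<lambda>s. inner (T s) (grad \<phi> (c s t) t) - m (c s t) t * deriv (\<lambda>s. \<zeta> (c s t) t) s)"
    by (simp add: circulation_def T_def)
  moreover have "((\<lambda>s. inner (T s) (grad \<phi> (c s t) t)) has_integral 0) {0..1}"
    using fundamental_theorem_of_calculus_at[of 0 1 "\<lambda>s. \<phi> (c s t) t",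
        OF _ has_real_derivative_field_fixed_time[OF \<phi> T]] closed by simp
  moreover have "continuous_on {0..1} (\<lambda>s. m (c s t) t)"
    by (rule continuous_on_slice[OF continuous_on_loop_field[OF m C1_imp_continuous_on[OF c]]])
  moreover have "continuous_on {0..1} (\<lambda>s. deriv (\<lambda>s. \<zeta> (c s t) t) s)"
    by (rule continuous_on_slice[OF continuous_on_loop_slope[OF \<zeta> c]])
  ultimately show ?thesis
    by (simp add: integral_diff has_integral_integrable integral_unique
        integrable_continuous_real continuous_on_mult)
qed

lemma loop_circulation_rate:
  fixes L Lt Z W B G :: "real \<Rightarrow> real \<Rightarrow> real" and \<kappa> \<epsilon> \<sigma> :: real
  assumes L_t: "\<And>s t. ((\<lambda>t. L s t) has_real_derivative Lt s t) (at t)"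
    and Z_s: "\<And>s t. (\<lambda>s. Z s t) differentiable (at s)" and W_s: "\<And>s t. (\<lambda>s. W s t) differentiable (at s)"
    and Z_st: "\<And>s t. ((\<lambda>t. deriv (\<lambda>s. Z s t) s) has_real_derivative deriv (\<lambda>s. W s t) s) (at t)"
    and closed: "\<And>t. Z 0 t = Z 1 t" "\<And>t. W 0 t = W 1 t"
    and L_eq: "\<And>s t. L s t = W s t * (1 + \<epsilon> * \<sigma>\<^sup>2 * G s t)"
    and Lt_eq: "\<And>s t. Lt s t = \<kappa> - \<epsilon> * \<sigma>\<^sup>2 * B s t"
    and cont: "continuous_on UNIV (\<lambda>(s, t). L s t)" "continuous_on UNIV (\<lambda>(s, t). Lt s t)"
      "continuous_on UNIV (\<lambda>(s, t). deriv (\<lambda>s. Z s t) s)" "continuous_on UNIV (\<lambda>(s, t). deriv (\<lambda>s. W s t) s)"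
  shows "((\<lambda>t. - \<sigma>\<^sup>2 * integral {0..1} (\<lambda>s. L s t * deriv (\<lambda>s. Z s t) s)) has_real_derivative
      \<epsilon> * \<sigma> ^ 4 * integral {0..1} (\<lambda>s. B s t * deriv (\<lambda>s. Z s t) s
        - G s t * deriv (\<lambda>s. (W s t)\<^sup>2) s / 2)) (at t)"
proof -
  define Zs where "Zs s t = deriv (\<lambda>s. Z s t) s" for s t
  define Ws where "Ws s t = deriv (\<lambda>s. W s t) s" for s t
  have Z': "((\<lambda>s. Z s t) has_real_derivative Zs s t) (at s)"
    and W': "((\<lambda>s. W s t) has_real_derivative Ws s t) (at s)" for s t
    using Z_s W_s by (simp_all add: Zs_def Ws_def DERIV_deriv_iff_real_differentiable)
  have W2': "((\<lambda>s. (W s t)\<^sup>2 / 2) has_real_derivative W s t * Ws s t) (at s)" for s t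
    using W' by (auto intro!: derivative_eq_intros)
  have rate: "((\<lambda>t. integral {0..1} (\<lambda>s. L s t * Zs s t)) has_real_derivative
      integral {0..1} (\<lambda>s. Lt s t * Zs s t + L s t * Ws s t)) (at t)"
    using has_real_derivative_integral_mult[OF L_t Z_st cont] by (simp add: Zs_def Ws_def)
  have "((\<lambda>s. Zs s t) has_integral 0) {0..1}"
    using fundamental_theorem_of_calculus_at[of 0 1 "\<lambda>s. Z s t", OF _ Z'] closed(1) by simp
  moreover have "((\<lambda>s. W s t * Ws s t) has_integral 0) {0..1}"
    using fundamental_theorem_of_calculus_at[of 0 1 "\<lambda>s. (W s t)\<^sup>2 / 2", OF _ W2'] closed(2) by simp
  moreover have "continuous_on UNIV (\<lambda>(s, t). Lt s t * Zs s t + L s t * Ws s t)"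
    using cont unfolding Zs_def Ws_def case_prod_beta' by (intro continuous_on_mult continuous_on_add; simp)+
  then have "(\<lambda>s. Lt s t * Zs s t + L s t * Ws s t) integrable_on {0..1}"
    by (rule integrable_continuous_real[OF continuous_on_slice])
  ultimately have "((\<lambda>s. - \<sigma>\<^sup>2 * (Lt s t * Zs s t + L s t * Ws s t) + \<sigma>\<^sup>2 * \<kappa> * Zs s t
      + \<sigma>\<^sup>2 * (W s t * Ws s t)) has_integral
      - \<sigma>\<^sup>2 * integral {0..1} (\<lambda>s. Lt s t * Zs s t + L s t * Ws s t) + \<sigma>\<^sup>2 * \<kappa> * 0 + \<sigma>\<^sup>2 * 0) {0..1}"
    by (intro has_integral_add has_integral_mult_right integrable_integral)
  moreover have "deriv (\<lambda>s. (W s t)\<^sup>2) s = 2 * W s t * Ws s t" for s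
    using W' by (auto intro!: DERIV_imp_deriv derivative_eq_intros)
  ultimately have "\<epsilon> * \<sigma> ^ 4 * integral {0..1} (\<lambda>s. B s t * Zs s t - G s t * deriv (\<lambda>s. (W s t)\<^sup>2) s / 2)
      = - \<sigma>\<^sup>2 * integral {0..1} (\<lambda>s. Lt s t * Zs s t + L s t * Ws s t)"
    by (simp add: integral_unique L_eq Lt_eq algebra_simps power4_eq_xxxx power2_eq_square flip: integral_mult_right)
  with DERIV_cmult[OF rate, of "- \<sigma>\<^sup>2"] show ?thesis
    by (simp add: Zs_def)
qed

lemma material_deriv_momentum_ratio:
  fixes v :: "real \<times> real \<Rightarrow> real \<Rightarrow> real \<times> real" and w D zeta lam :: "real \<times> real \<Rightarrow> real \<Rightarrow> real"
  assumes v: "(\<lambda>(r, t). v r t) differentiable (at (r, t))"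
    and w: "(\<lambda>(r, t). w r t) differentiable (at (r, t))"
    and D: "(\<lambda>(r, t). D r t) differentiable (at (r, t))" and D_ne: "D r t \<noteq> 0"
    and lam: "(\<lambda>(r, t). lam r t) differentiable (at (r, t))"
    and grad_zeta: "(\<lambda>(r, t). grad zeta r t) differentiable (at (r, t))"
    and eq_lam_t: "pdt lam r t + hdiv (\<lambda>r t. lam r t *\<^sub>R v r t) r t
      = - D r t / (\<sigma>\<^sup>2 * Fr\<^sup>2) - hdiv (\<lambda>r t. (\<epsilon> * \<sigma>\<^sup>2 * D r t * (w r t)\<^sup>2) *\<^sub>R grad zeta r t) r t"
    and eq_D: "pdt D r t + hdiv (\<lambda>r t. D r t *\<^sub>R v r t) r t = 0"
  shows "material_deriv v (\<lambda>r t. lam r t / D r t) r t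
    = - 1 / (\<sigma>\<^sup>2 * Fr\<^sup>2) - \<epsilon> * \<sigma>\<^sup>2 * (1 / D r t * hdiv (\<lambda>r t. (D r t * (w r t)\<^sup>2) *\<^sub>R grad zeta r t) r t)"
proof -
  define U where "U = (\<lambda>r t. (D r t * (w r t)\<^sup>2) *\<^sub>R grad zeta r t)"
  have "(\<lambda>(r, t). U r t) differentiable (at (r, t))"
    using w D grad_zeta unfolding U_def case_prod_beta'
    by (intro differentiable_scaleR differentiable_mult differentiable_power)
  then have "hdiv (\<lambda>r t. (\<epsilon> * \<sigma>\<^sup>2 * D r t * (w r t)\<^sup>2) *\<^sub>R grad zeta r t) r t = \<epsilon> * \<sigma>\<^sup>2 * hdiv U r t"
    using hdiv_scaleR_const[of U r t "\<epsilon> * \<sigma>\<^sup>2"] by (simp add: U_def mult.assoc)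
  with eq_lam_t have "pdt lam r t + hdiv (\<lambda>r t. lam r t *\<^sub>R v r t) r t
      = - D r t / (\<sigma>\<^sup>2 * Fr\<^sup>2) - \<epsilon> * \<sigma>\<^sup>2 * hdiv U r t"
    by simp
  from material_deriv_specific_density[OF lam D D_ne v this eq_D]
  show ?thesis
    using D_ne by (simp add: U_def field_simps)
qed

theorem mainTheorem2:
  fixes v :: "real \<times> real \<Rightarrow> real \<Rightarrow> real \<times> real"
    and w D phi zeta lam :: "real \<times> real \<Rightarrow> real \<Rightarrow> real"
    and c :: "real \<Rightarrow> real \<Rightarrow> real \<times> real"
    and \<sigma> Fr \<epsilon> :: real
  assumes sigma_pos: "\<sigma> > 0" and Fr_pos: "Fr > 0" and eps: "0 \<le> \<epsilon>" "\<epsilon> \<le> 1"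
    and smooth: "C2 (\<lambda>(r, t). v r t)" "C2 (\<lambda>(r, t). w r t)" "C2 (\<lambda>(r, t). D r t)"
       "C2 (\<lambda>(r, t). phi r t)" "C2 (\<lambda>(r, t). zeta r t)" "C2 (\<lambda>(r, t). lam r t)"
    and D_pos: "\<And>r t. D r t > 0"
    and eq_V: "\<And>r t. v r t + (\<sigma>\<^sup>2 * (lam r t / D r t)) *\<^sub>R grad zeta r t = grad phi r t"
    and eq_lam: "\<And>r t. lam r t / D r t = w r t * (1 + \<epsilon> * \<sigma>\<^sup>2 * (norm (grad zeta r t))\<^sup>2)"
    and eq_zeta: "\<And>r t. pdt zeta r t + inner (v r t) (grad zeta r t) - w r t = 0"
    and eq_lam_t: "\<And>r t. pdt lam r t + hdiv (\<lambda>r t. lam r t *\<^sub>R v r t) r t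
                     = - D r t / (\<sigma>\<^sup>2 * Fr\<^sup>2)
                       - hdiv (\<lambda>r t. (\<epsilon> * \<sigma>\<^sup>2 * D r t * (w r t)\<^sup>2) *\<^sub>R grad zeta r t) r t"
    and eq_D: "\<And>r t. pdt D r t + hdiv (\<lambda>r t. D r t *\<^sub>R v r t) r t = 0"
    and eq_phi: "\<And>r t. pdt phi r t + inner (v r t) (grad phi r t)
                   = (1/2) * ((norm (v r t))\<^sup>2 + \<sigma>\<^sup>2 * (w r t)\<^sup>2 * (1 + \<epsilon> * \<sigma>\<^sup>2 * (norm (grad zeta r t))\<^sup>2))
                     - zeta r t / Fr\<^sup>2"
    and loop_smooth: "C2 (\<lambda>(s, t). c s t)"
    and loop_closed: "\<And>t. c 0 t = c 1 t"
    and loop_material: "\<And>s t. ((\<lambda>\<tau>. c s \<tau>) has_vector_derivative v (c s t) t) (at t)"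
  shows "\<And>t. ((\<lambda>t. circulation v c t) has_real_derivative
           \<epsilon> * \<sigma> ^ 4 * integral {0..1} (\<lambda>s.
              (1 / D (c s t) t) * hdiv (\<lambda>r t. (D r t * (w r t)\<^sup>2) *\<^sub>R grad zeta r t) (c s t) t
                * deriv (\<lambda>s. zeta (c s t) t) s
              - (norm (grad zeta (c s t) t))\<^sup>2 * deriv (\<lambda>s. (w (c s t) t)\<^sup>2) s / 2)) (at t)"
proof -
  note C1 = smooth[THEN C2_imp_C1] loop_smooth[THEN C2_imp_C1]
  note diff = C1[THEN C1_imp_differentiable] and cont = C1[THEN C1_imp_continuous_on]
  have D_ne: "D r t \<noteq> 0" for r t
    using D_pos[of r t] by simp
  have ratio_cont: "continuous_on UNIV (\<lambda>(r, t). lam r t / D r t)"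
    and momentum_cont: "continuous_on UNIV (\<lambda>(r, t). \<sigma>\<^sup>2 * (lam r t / D r t))"
    using cont(3,6) D_ne unfolding case_prod_beta' by (auto intro!: continuous_intros)
  from circulation_Clebsch[OF eq_V diff(4) C1(5) momentum_cont C1(7) loop_closed]
  have circ: "circulation v c t
      = - \<sigma>\<^sup>2 * integral {0..1} (\<lambda>s. lam (c s t) t / D (c s t) t * deriv (\<lambda>s. zeta (c s t) t) s)" for t
    by (simp only: mult.assoc integral_mult_right mult_minus_left)
  have ratio_t: "((\<lambda>t. lam (c s t) t / D (c s t) t) has_real_derivative
      material_deriv v (\<lambda>r t. lam r t / D r t) (c s t) t) (at t)" for s t
    by (rule has_real_derivative_material_deriv[of "\<lambda>r t. lam r t / D r t" "c s" t v, OF _ loop_material])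
      (use diff(3,6) D_ne in \<open>auto simp: case_prod_beta' intro!: differentiable_divide\<close>)
  have "((\<lambda>t. zeta (c s t) t) has_real_derivative w (c s t) t) (at t)" for s t
    using has_real_derivative_material_deriv[of zeta "c s" t v, OF diff(5) loop_material] eq_zeta
    by (simp add: material_deriv_def inner_commute)
  note zeta_st = loop_slope_time_derivative[OF smooth(5) loop_smooth diff(2) this]
  have closed: "zeta (c 0 t) t = zeta (c 1 t) t" "w (c 0 t) t = w (c 1 t) t" for t
    by (simp_all add: loop_closed)
  show "\<And>t. ?thesis t"
    unfolding circ
    by (rule loop_circulation_rate[where Z="\<lambda>s t. zeta (c s t) t" and W="\<lambda>s t. w (c s t) t", OF ratio_t
          loop_slope_differentiable[OF diff(5) C1(7)] loop_slope_differentiable[OF diff(2) C1(7)] zeta_st closed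
          eq_lam material_deriv_momentum_ratio[OF diff(1,2,3) D_ne diff(6) differentiable_grad[OF smooth(5)]
            eq_lam_t eq_D]
          continuous_on_loop_field[OF ratio_cont cont(7)]
          continuous_on_loop_field[OF continuous_on_material_deriv_divide[OF C1(6,3) D_ne cont(1)] cont(7)]
          continuous_on_loop_slope[OF C1(5,7)] continuous_on_loop_slope[OF C1(2,7)]])
qed

end
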